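(* Let $p=a/b$ with $a,b$ positive coprime integers and $b\not\equiv 0\pmod 4$. Set $k'=b$ if $b$ is even and $k'=2b$ if $b$ is odd. Let $(\Delta_L^{(m)})_{m\ge 1}$ be any real sequence satisfying $\Delta_L^{(m+1)}=\Delta_L^{(m)}+1+2p-2\lceil\Delta_L^{(m)}\rceil$ for all $m\ge1$ (with arbitrary real initial value $\Delta_L^{(1)}$). Then $\Delta_L^{(m+k')}=\Delta_L^{(m)}$ for all $m\ge 1$; equivalently, $$k'p+\sum_{l=0}^{k'-1}(-1)^l\lceil \Delta_L^{(m)}+2lp\rceil=0\quad\text{for all } m\ge1 .$$
   Context: $\lceil\cdot\rceil$ denotes the ceiling function. The recursion for $\Delta_L$ is the "leading-order" approximation of the extremum-to-extremum evolution of the dynamical system $p(i+1)=p(i)-\operatorname{sgn}x(i)$, $x(i+1)=x(i)+p(i)-\operatorname{sgn}x(i)$. *)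

theory Defs
  imports Complex_Main
begin

end

theory Submission
  imports Defs
begin

text \<open>Fix \<open>m\<close> and write \<open>e l = D (m + l) - D m - 2 l p\<close>. The recursion keeps \<open>e l\<close>
  integral, so \<open>\<lceil>D (m + l)\<rceil> = \<lceil>D m + 2 l p\<rceil> + e l\<close> and \<open>e (l + 1) = 1 - e l - 2 \<lceil>D m + 2 l p\<rceil>\<close>;
  hence \<open>(-1)^l e l\<close> telescopes to an alternating sum of the ceilings \<open>\<lceil>D m + 2 j p\<rceil>\<close>.
  Since \<open>4\<close> does not divide \<open>b\<close>, \<open>k' = 2h\<close> with \<open>h\<close> odd and \<open>2hp\<close> an integer. The ceilings
  at \<open>j\<close> and \<open>j + h\<close> then differ by \<open>2hp\<close> but enter the alternating sum with opposite signs,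
  so the sum over one period is \<open>-k'p\<close>. This is the second claim, and it gives
  \<open>e k' = -2k'p\<close>, i.e. \<open>D (m + k') = D m\<close>.\<close>

lemma sum_neg_one_power_lessThan:
  "(\<Sum>l<n. (-1::'a::ring_1) ^ l) = (if even n then 0 else 1)"
  by (induction n) auto

lemma sum_lessThan_double:
  fixes f :: "nat \<Rightarrow> 'a::comm_monoid_add"
  shows "(\<Sum>l<h + h. f l) = (\<Sum>l<h. f l) + (\<Sum>l<h. f (l + h))"
  using sum.atLeastLessThan_concat[of 0 h "h + h" f] sum.shift_bounds_nat_ivl[of f 0 h h]
  by (simp add: atLeast0LessThan)

lemma alternating_sum_ceiling_arith_progression:
  fixes x s :: real
  assumes "odd h" and "real h * s \<in> \<int>"
  shows "(\<Sum>l<2 * h. (-1) ^ l * of_int \<lceil>x + real l * s\<rceil>) = - (real h * s)"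
proof -
  define c where "c l = real_of_int \<lceil>x + real l * s\<rceil>" for l
  from assms(2) obtain N where N: "real h * s = of_int N"
    by (auto elim: Ints_cases)
  have shift: "c (l + h) = c l + real h * s" for l
  proof -
    have "x + real (l + h) * s = (x + real l * s) + of_int N"
      using N by (simp add: algebra_simps)
    then show ?thesis
      unfolding c_def N by (simp only: ceiling_add_of_int of_int_add)
  qed
  have "(\<Sum>l<2 * h. (-1) ^ l * c l) = (\<Sum>l<h. (-1) ^ l * c l + (-1) ^ (l + h) * c (l + h))"
    by (simp add: mult_2 sum_lessThan_double sum.distrib)
  also have "\<dots> = (\<Sum>l<h. - ((-1) ^ l * (real h * s)))"
    using assms(1) by (simp add: shift power_add algebra_simps)
  also have "\<dots> = - (real h * s)"
    using assms(1) by (simp add: sum_negf sum_neg_one_power_lessThan flip: sum_distrib_right)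
  finally show ?thesis
    unfolding c_def .
qed

lemma ceiling_recursion_offset_Ints:
  fixes D :: "nat \<Rightarrow> real"
  assumes rec: "\<And>n. n \<ge> m \<Longrightarrow> D (n + 1) = D n + 1 + 2 * p - 2 * of_int \<lceil>D n\<rceil>"
  shows "D (m + l) - D m - 2 * real l * p \<in> \<int>"
proof (induction l)
  case 0
  then show ?case by simp
next
  case (Suc l)
  have step: "D (m + Suc l) - D m - 2 * real (Suc l) * p
      = (D (m + l) - D m - 2 * real l * p) + (1 - 2 * of_int \<lceil>D (m + l)\<rceil>)"
    using rec[of "m + l"] by (simp add: algebra_simps)
  show ?case
    unfolding step by (rule Ints_add[OF Suc]) simp
qed

lemma ceiling_recursion_alternating_telescope:
  fixes D :: "nat \<Rightarrow> real"
  assumes rec: "\<And>n. n \<ge> m \<Longrightarrow> D (n + 1) = D n + 1 + 2 * p - 2 * of_int \<lceil>D n\<rceil>"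
  shows "(-1) ^ l * (D (m + l) - D m - 2 * real l * p)
       = 2 * (\<Sum>j<l. (-1) ^ j * of_int \<lceil>D m + 2 * real j * p\<rceil>) - (\<Sum>j<l. (-1) ^ j)"
proof (induction l)
  case 0
  then show ?case by simp
next
  case (Suc l)
  define e where "e = D (m + l) - D m - 2 * real l * p"
  obtain z where z: "e = of_int z"
    using ceiling_recursion_offset_Ints[of m D p l, OF rec] unfolding e_def by (auto elim: Ints_cases)
  have "D (m + l) = (D m + 2 * real l * p) + of_int z"
    using z unfolding e_def by simp
  then have ceil: "\<lceil>D (m + l)\<rceil> = \<lceil>D m + 2 * real l * p\<rceil> + z"
    by simp
  have step: "D (m + Suc l) - D m - 2 * real (Suc l) * p
      = 1 - e - 2 * of_int \<lceil>D m + 2 * real l * p\<rceil>"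
    using rec[of "m + l"] z ceil unfolding e_def by (simp add: algebra_simps)
  have "(-1) ^ Suc l * (D (m + Suc l) - D m - 2 * real (Suc l) * p)
      = (-1) ^ l * e + 2 * ((-1) ^ l * of_int \<lceil>D m + 2 * real l * p\<rceil>) - (-1) ^ l"
    unfolding step by (simp add: algebra_simps)
  then show ?case
    using Suc unfolding e_def by simp
qed

lemma half_period_odd:
  fixes a b :: int
  assumes "b > 0" and "\<not> 4 dvd b"
  obtains h :: nat where "odd h" and "(if even b then nat b else 2 * nat b) = 2 * h"
    and "real h * (2 * (of_int a / of_int b)) \<in> \<int>"
proof (cases "even b")
  case True
  then obtain c where c: "b = 2 * c"
    by blast
  with assms have "odd c" "c > 0"
    by auto
  then show ?thesis
    using that[of "nat c"] True c by (simp add: even_nat_iff)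
next
  case False
  then show ?thesis
    using that[of "nat b"] assms(1) by (simp add: even_nat_iff)
qed

theorem lemma1:
  fixes a b :: int and p :: real and k' :: nat and D :: "nat \<Rightarrow> real"
  assumes "a > 0" and "b > 0" and "coprime a b" and "\<not> (4 dvd b)"
    and "p = of_int a / of_int b"
    and "k' = (if even b then nat b else 2 * nat b)"
    and "\<And>m. m \<ge> 1 \<Longrightarrow> D (m + 1) = D m + 1 + 2 * p - 2 * of_int \<lceil>D m\<rceil>"
  shows "(\<forall>m\<ge>1. D (m + k') = D m) \<and>
         (\<forall>m\<ge>1. real k' * p + (\<Sum>l<k'. (-1) ^ l * of_int \<lceil>D m + 2 * real l * p\<rceil>) = 0)"
proof -
  obtain h where h: "odd h" "k' = 2 * h" "real h * (2 * p) \<in> \<int>"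
    using half_period_odd[OF assms(2,4), of a] assms(5,6) by metis
  have period_sum: "(\<Sum>l<k'. (-1) ^ l * of_int \<lceil>x + 2 * real l * p\<rceil>) = - (real k' * p)" for x
    using alternating_sum_ceiling_arith_progression[OF h(1,3), of x] h(2)
    by (simp add: ac_simps)
  have "D (m + k') = D m" if "m \<ge> 1" for m
  proof -
    have rec: "\<And>n. n \<ge> m \<Longrightarrow> D (n + 1) = D n + 1 + 2 * p - 2 * of_int \<lceil>D n\<rceil>"
      using assms(7) that by simp
    show ?thesis
      using ceiling_recursion_alternating_telescope[of m D p k', OF rec] period_sum[of "D m"] h(2)
      by (simp add: sum_neg_one_power_lessThan)
  qed
  then show ?thesis
    using period_sum by simp
qed

end
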